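(* Let $x=(x_1|x_2|x_3)$, $y=(y_1|y_2|y_3)$, $z=(z_1|z_2|z_3)$ be pairwise orthogonal (over $\mathbb{F}_2$) binary vectors of length 24, each split into three blocks of length 8, such that every block $x_i,y_i,z_i$ ($i=1,2,3$) has weight 4 (so each of $x,y,z$ has weight 12). Suppose that for each $i=1,2,3$ the images $\psi(x_i),\psi(y_i),\psi(z_i)$ are linearly independent in the quotient space $\mathbb{F}_2^8/\langle \mathbf{0},\mathbf{1}\rangle$, and that $$\mathrm{wt}(x_i+y_i)=\mathrm{wt}(x_i+z_i)=\mathrm{wt}(y_i+z_i)=4\quad (i=1,2,3).$$ Then: (a) $|\mathcal{L}(x)|=|\mathcal{L}(y)|=|\mathcal{L}(z)|=576^4$; (b) $|\mathcal{L}(x,y)|=16^4$, and moreover $\mathcal{L}(x,y)=\mathcal{L}(x,x+y)=\mathcal{L}(x+y,y)$; (c) $|\mathcal{L}(x,y,z)|=1$.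
   Context: A Latin square of order 8 on the symbols $\{0,1,\dots,7\}$ is an $8\times 8$ array $(a_{i,j})_{i,j=0}^{7}$ in which every symbol occurs exactly once in each row and each column; it is identified with the code $L=\{(i,j,a_{i,j}):0\le i,j\le 7\}\subseteq\{0,\dots,7\}^3$ of 64 words. Let $\mathcal{L}$ be the set of all such codes $L$ (all Latin squares of order 8). Let $\varphi(s)\in\mathbb{F}_2^8$ denote the unit vector with a 1 in position $s$ (positions indexed $0,\dots,7$), and for $L\in\mathcal{L}$ let $C(L)=\{(\varphi(i)\,|\,\varphi(j)\,|\,\varphi(a_{i,j})):(i,j,a_{i,j})\in L\}\subseteq\mathbb{F}_2^{24}$. For $x\in\mathbb{F}_2^{24}$, $\mathcal{L}(x)$ is the set of all $L\in\mathcal{L}$ such that every word of $C(L)$ is orthogonal to $x$ over $\mathbb{F}_2$; $\mathcal{L}(x,y)=\mathcal{L}(x)\cap\mathcal{L}(y)$ and $\mathcal{L}(x,y,z)=\mathcal{L}(x)\cap\mathcal{L}(y)\cap\mathcal{L}(z)$. $\mathbf{0},\mathbf{1}$ denote the all-zero and all-one vectors of length 8, and $\psi:\mathbb{F}_2^8\to\mathbb{F}_2^8/\langle\mathbf{0},\mathbf{1}\rangle$ is the quotient map. $\mathrm{wt}$ denotes Hamming weight. *)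

theory Defs
  imports Main
begin

text \<open>Binary vectors are modelled as functions nat => bool (True = 1 in F_2);
  a vector of length n is one that vanishes at positions >= n.
  Addition over F_2 is pointwise exclusive or.\<close>

type_synonym bvec = "nat \<Rightarrow> bool"

definition vadd :: "bvec \<Rightarrow> bvec \<Rightarrow> bvec" where
  "vadd u v = (\<lambda>k. u k \<noteq> v k)"

definition wt :: "nat \<Rightarrow> bvec \<Rightarrow> nat" where
  "wt n u = card {k. k < n \<and> u k}"

definition orth :: "nat \<Rightarrow> bvec \<Rightarrow> bvec \<Rightarrow> bool" where
  "orth n u v \<longleftrightarrow> even (card {k. k < n \<and> u k \<and> v k})"

text \<open>Block i (i = 0,1,2) of a length-24 vector x = (x_1|x_2|x_3), a vector of length 8.\<close>
definition block :: "bvec \<Rightarrow> nat \<Rightarrow> bvec" where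
  "block x i = (\<lambda>p. p < 8 \<and> x (8 * i + p))"

definition phi :: "nat \<Rightarrow> bvec" where
  "phi s = (\<lambda>p. p < 8 \<and> p = s)"

definition concat3 :: "bvec \<Rightarrow> bvec \<Rightarrow> bvec \<Rightarrow> bvec" where
  "concat3 u v w = (\<lambda>k. if k < 8 then u k else if k < 16 then v (k - 8)
                         else if k < 24 then w (k - 16) else False)"

text \<open>The set of all Latin squares of order 8, identified with their codes.\<close>
definition latin_codes :: "(nat \<times> nat \<times> nat) set set" where
  "latin_codes = {L. \<exists>a :: nat \<Rightarrow> nat \<Rightarrow> nat.
      (\<forall>i<8. \<forall>j<8. a i j < 8) \<and>
      (\<forall>i<8. inj_on (\<lambda>j. a i j) {0..<8}) \<and>
      (\<forall>j<8. inj_on (\<lambda>i. a i j) {0..<8}) \<and>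
      L = {(i, j, a i j) | i j. i < 8 \<and> j < 8}}"

definition Ccode :: "(nat \<times> nat \<times> nat) set \<Rightarrow> bvec set" where
  "Ccode L = (\<lambda>(i, j, s). concat3 (phi i) (phi j) (phi s)) ` L"

definition LS :: "bvec \<Rightarrow> (nat \<times> nat \<times> nat) set set" where
  "LS x = {L \<in> latin_codes. \<forall>c \<in> Ccode L. orth 24 c x}"

definition LS2 :: "bvec \<Rightarrow> bvec \<Rightarrow> (nat \<times> nat \<times> nat) set set" where
  "LS2 x y = LS x \<inter> LS y"

definition LS3 :: "bvec \<Rightarrow> bvec \<Rightarrow> bvec \<Rightarrow> (nat \<times> nat \<times> nat) set set" where
  "LS3 x y z = LS x \<inter> LS y \<inter> LS z"

text \<open>psi(u), psi(v), psi(w) linearly independent in F_2^8 / <0,1>: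
  no nontrivial F_2-linear combination a u + b v + c w lies in {0, 1}
  (as vectors of length 8).\<close>
definition psi_indep3 :: "bvec \<Rightarrow> bvec \<Rightarrow> bvec \<Rightarrow> bool" where
  "psi_indep3 u v w \<longleftrightarrow>
     (\<forall>a b c :: bool. (a \<or> b \<or> c) \<longrightarrow>
        (let s = (\<lambda>p. (a \<and> u p) \<noteq> ((b \<and> v p) \<noteq> (c \<and> w p))) in
          \<not> (\<forall>p<8. \<not> s p) \<and> \<not> (\<forall>p<8. s p)))"

end

theory Submission
  imports Defs "HOL-Library.FuncSet" "HOL-Library.Cardinality"
begin

text \<open>A code word (i|j|s) is orthogonal to v iff v(16+s) = v(i) + v(8+j). Hence, reading the
  three blocks of v as maps rho, kappa, sigma from {0..7} to F_2, the squares in L(v) are exactly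
  the Latin squares f with sigma(f(i,j)) = rho(i) + kappa(j); for several vectors the same holds
  with values in F_2^k. Such a square is the same thing as an independent choice of a Latin square
  on every fibre block rho^-1(p) x kappa^-1(q) with symbols sigma^-1(p+q), provided all fibres
  have a common size m; so there are N(m)^(4^k) of them, N(m) the number of Latin squares of
  order m. The weight and independence hypotheses force the columns (x_i,y_i,z_i)(p), p < 8, of
  each block to run through F_2^3 exactly once, so m = 4, 2, 1 for one, two, three vectors, and
  N(4) = 576, N(2) = 2, N(1) = 1 are found by enumeration.\<close>

section \<open>Counting through fibres\<close>

lemma bij_betw_if_inj_on_card:
  assumes "finite B" "inj_on f A" "f ` A \<subseteq> B" "card A = card B"
  shows "bij_betw f A B"
  using assms by (metis bij_betw_def card_image card_subset_eq)

lemma inj_on_if_inj_on_fibres: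
  assumes "\<And>x y. x \<in> A \<Longrightarrow> y \<in> A \<Longrightarrow> f x = f y \<Longrightarrow> k x = k y"
    and "\<And>t. inj_on f {x \<in> A. k x = t}"
  shows "inj_on f A"
  using assms unfolding inj_on_def by blast

lemma card_eq_sum_card_fibres:
  fixes g :: "'a \<Rightarrow> 'b::finite"
  assumes "finite A"
  shows "card {x \<in> A. Q (g x)} = (\<Sum>t\<in>UNIV. if Q t then card {x \<in> A. g x = t} else 0)"
proof -
  have "card {x \<in> A. Q (g x)} = card (\<Union>t\<in>{t. Q t}. {x \<in> A. g x = t})"
    by (rule arg_cong[where f = card]) auto
  also have "\<dots> = (\<Sum>t\<in>{t. Q t}. card {x \<in> A. g x = t})"
    by (rule card_UN_disjoint) (use assms in auto)
  finally show ?thesis by (simp add: sum.If_cases)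
qed

lemma card_eq_if_card_fibres:
  fixes g :: "'a \<Rightarrow> 'b::finite"
  assumes "finite A" "\<And>t. card {x \<in> A. g x = t} = n"
  shows "card A = CARD('b) * n"
  using card_eq_sum_card_fibres[OF assms(1), of "\<lambda>_. True" g] assms(2) by simp

lemma card_fibres_comp_if_card_fibres_1:
  fixes g :: "'a \<Rightarrow> 'b::finite"
  assumes "finite A" "\<And>t. card {x \<in> A. g x = t} = 1"
  shows "card {x \<in> A. h (g x) = c} = card {t. h t = c}"
  using card_eq_sum_card_fibres[OF assms(1), of "\<lambda>t. h t = c" g] assms(2) by (simp add: sum.If_cases)

section \<open>Latin squares on finite sets\<close>

definition latin_squares :: "'a set \<Rightarrow> 'b set \<Rightarrow> 'c set \<Rightarrow> ('a \<times> 'b \<Rightarrow> 'c) set" where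
  "latin_squares R C S = {f \<in> extensional (R \<times> C).
     (\<forall>i\<in>R. bij_betw (\<lambda>j. f (i, j)) C S) \<and> (\<forall>j\<in>C. bij_betw (\<lambda>i. f (i, j)) R S)}"

lemma latin_square_value_in:
  "f \<in> latin_squares R C S \<Longrightarrow> i \<in> R \<Longrightarrow> j \<in> C \<Longrightarrow> f (i, j) \<in> S"
  unfolding latin_squares_def bij_betw_def by blast

lemma latin_squares_subset_PiE: "latin_squares R C S \<subseteq> (R \<times> C) \<rightarrow>\<^sub>E S"
  by (auto simp: PiE_def latin_squares_def intro: latin_square_value_in)

lemma finite_latin_squares:
  "finite R \<Longrightarrow> finite C \<Longrightarrow> finite S \<Longrightarrow> finite (latin_squares R C S)"
  by (rule finite_subset[OF latin_squares_subset_PiE]) (auto intro: finite_PiE)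

lemma restrict_in_latin_squares_iff:
  "restrict f (R \<times> C) \<in> latin_squares R C S \<longleftrightarrow>
     (\<forall>i\<in>R. bij_betw (\<lambda>j. f (i, j)) C S) \<and> (\<forall>j\<in>C. bij_betw (\<lambda>i. f (i, j)) R S)"
  by (auto simp: latin_squares_def cong: bij_betw_cong)

lemma card_latin_squares_le:
  assumes fin: "finite R'" "finite C'" "finite S'"
    and r: "bij_betw r R' R" and c: "bij_betw c C' C" and s: "bij_betw s S S'"
  shows "card (latin_squares R C S) \<le> card (latin_squares R' C' S')"
proof -
  define relabel where "relabel f = restrict (\<lambda>(i, j). s (f (r i, c j))) (R' \<times> C')" for f
  have "inj_on relabel (latin_squares R C S)"
  proof
    fix f g assume f: "f \<in> latin_squares R C S" and g: "g \<in> latin_squares R C S"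
      and eq: "relabel f = relabel g"
    show "f = g"
    proof (rule extensionalityI)
      show "f \<in> extensional (R \<times> C)" "g \<in> extensional (R \<times> C)"
        using f g by (auto simp: latin_squares_def)
      fix p assume "p \<in> R \<times> C"
      then obtain i' j' where p: "p = (r i', c j')" "i' \<in> R'" "j' \<in> C'"
        using r c by (auto simp: bij_betw_def)
      have "s (f p) = s (g p)"
        using fun_cong[OF eq, of "(i', j')"] p by (simp add: relabel_def)
      moreover have "f p \<in> S" "g p \<in> S"
        using f g p r c by (auto simp: bij_betw_def intro: latin_square_value_in)
      ultimately show "f p = g p" using s by (auto simp: bij_betw_def dest: inj_onD)
    qed
  qed
  moreover have "relabel ` latin_squares R C S \<subseteq> latin_squares R' C' S'"
  proof
    fix h assume "h \<in> relabel ` latin_squares R C S"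
    then obtain f where f: "f \<in> latin_squares R C S" and h: "h = relabel f" by auto
    have "bij_betw (\<lambda>j. h (i, j)) C' S'" if i: "i \<in> R'" for i
    proof -
      have "bij_betw (\<lambda>j. f (r i, j)) C S"
        using f r i by (auto simp: latin_squares_def bij_betw_def)
      then have "bij_betw (s \<circ> (\<lambda>j. f (r i, j)) \<circ> c) C' S'"
        using c s by (metis bij_betw_trans)
      then show ?thesis by (rule bij_betw_cong[THEN iffD1, rotated]) (simp add: h relabel_def i)
    qed
    moreover have "bij_betw (\<lambda>i. h (i, j)) R' S'" if j: "j \<in> C'" for j
    proof -
      have "bij_betw (\<lambda>i. f (i, c j)) R S"
        using f c j by (auto simp: latin_squares_def bij_betw_def)
      then have "bij_betw (s \<circ> (\<lambda>i. f (i, c j)) \<circ> r) R' S'"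
        using r s by (metis bij_betw_trans)
      then show ?thesis by (rule bij_betw_cong[THEN iffD1, rotated]) (simp add: h relabel_def j)
    qed
    ultimately show "h \<in> latin_squares R' C' S'"
      by (simp add: latin_squares_def h relabel_def)
  qed
  ultimately show ?thesis
    using card_inj_on_le finite_latin_squares fin by metis
qed

lemma card_latin_squares_eq:
  assumes "finite R" "finite C" "finite S" "card R = n" "card C = n" "card S = n"
  shows "card (latin_squares R C S) = card (latin_squares {..<n} {..<n} {..<n})"
proof -
  obtain r c s where r: "bij_betw r {..<n} R" and c: "bij_betw c {..<n} C"
    and s: "bij_betw s {..<n} S"
    using assms by (metis atLeast0LessThan ex_bij_betw_nat_finite)
  show ?thesis
  proof (rule antisym)
    show "card (latin_squares R C S) \<le> card (latin_squares {..<n} {..<n} {..<n})"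
      by (rule card_latin_squares_le[OF _ _ _ r c bij_betw_the_inv_into[OF s]]) auto
    show "card (latin_squares {..<n} {..<n} {..<n}) \<le> card (latin_squares R C S)"
      by (rule card_latin_squares_le[OF assms(1-3) bij_betw_the_inv_into[OF r]
            bij_betw_the_inv_into[OF c] s])
  qed
qed

section \<open>Latin squares of small order\<close>

definition perm_lists :: "nat \<Rightarrow> nat list list" where
  "perm_lists n = filter distinct (List.n_lists n [0..<n])"

definition latin_rect :: "nat \<Rightarrow> nat list list \<Rightarrow> bool" where
  "latin_rect n xss \<longleftrightarrow> (\<forall>r\<in>set xss. length r = n \<and> distinct r \<and> set r \<subseteq> {..<n})
     \<and> (\<forall>j<n. distinct (map (\<lambda>r. r ! j) xss))"

fun latin_rects :: "nat \<Rightarrow> nat \<Rightarrow> nat list list list" where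
  "latin_rects n 0 = [[]]"
| "latin_rects n (Suc k) = concat (map (\<lambda>xss. map (\<lambda>r. r # xss)
     (filter (\<lambda>r. \<forall>xs\<in>set xss. list_all2 (\<noteq>) r xs) (perm_lists n))) (latin_rects n k))"

lemma mem_perm_lists: "r \<in> set (perm_lists n) \<longleftrightarrow> length r = n \<and> distinct r \<and> set r \<subseteq> {..<n}"
  by (auto simp: perm_lists_def set_n_lists)

lemma latin_rect_Nil [simp]: "latin_rect n []"
  by (simp add: latin_rect_def)

lemma latin_rect_Cons [simp]:
  "latin_rect n (r # xss) \<longleftrightarrow>
     r \<in> set (perm_lists n) \<and> (\<forall>xs\<in>set xss. list_all2 (\<noteq>) r xs) \<and> latin_rect n xss"
  by (auto simp: latin_rect_def mem_perm_lists list_all2_conv_all_nth)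

lemma distinct_concat_map:
  assumes "distinct xs" "\<And>x. distinct (f x)"
    and "\<And>x y. x \<noteq> y \<Longrightarrow> set (f x) \<inter> set (f y) = {}"
  shows "distinct (concat (map f xs))"
  using assms(1)
proof (induction xs)
  case (Cons a xs)
  have "set (f a) \<inter> set (f b) = {}" if "b \<in> set xs" for b
    using Cons.prems that by (intro assms(3)) auto
  then show ?case using Cons assms(2) by auto
qed simp

lemma distinct_n_lists: "distinct xs \<Longrightarrow> distinct (List.n_lists n xs)"
  by (induction n) (auto intro!: distinct_concat_map simp: distinct_map inj_on_def)

lemma set_latin_rects: "set (latin_rects n k) = {xss. length xss = k \<and> latin_rect n xss}"
  by (induction k) (auto simp: length_Suc_conv)

lemma distinct_latin_rects: "distinct (latin_rects n k)"
proof (induction k)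
  case (Suc k)
  have "distinct (perm_lists n)"
    unfolding perm_lists_def by (intro distinct_filter distinct_n_lists) simp
  then show ?case
    using Suc by (auto intro!: distinct_concat_map simp: distinct_map inj_on_def)
qed simp

definition rows_of :: "nat \<Rightarrow> (nat \<times> nat \<Rightarrow> nat) \<Rightarrow> nat list list" where
  "rows_of n f = map (\<lambda>i. map (\<lambda>j. f (i, j)) [0..<n]) [0..<n]"

definition square_of :: "nat \<Rightarrow> nat list list \<Rightarrow> nat \<times> nat \<Rightarrow> nat" where
  "square_of n xss = restrict (\<lambda>(i, j). xss ! i ! j) ({..<n} \<times> {..<n})"

lemma latin_rect_rows_of:
  assumes f: "f \<in> latin_squares {..<n} {..<n} {..<n}"
  shows "latin_rect n (rows_of n f)"
proof -
  have "inj_on (\<lambda>j. f (i, j)) {..<n}" "inj_on (\<lambda>i. f (i, j)) {..<n}"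
    "f (i, j) < n" if "i < n" "j < n" for i j
    using f that by (auto simp: latin_squares_def bij_betw_def)
  then show ?thesis
    by (auto simp: latin_rect_def rows_of_def distinct_map atLeast0LessThan comp_def)
qed

lemma square_of_in_latin_squares:
  assumes xss: "length xss = n" "latin_rect n xss"
  shows "square_of n xss \<in> latin_squares {..<n} {..<n} {..<n}"
proof -
  have row: "length (xss ! i) = n" "distinct (xss ! i)" "xss ! i ! j < n" if "i < n" "j < n" for i j
  proof -
    have "xss ! i \<in> set xss" using xss(1) that by simp
    then have r: "length (xss ! i) = n" "distinct (xss ! i)" "set (xss ! i) \<subseteq> {..<n}"
      using xss(2) by (auto simp: latin_rect_def)
    then show "length (xss ! i) = n" "distinct (xss ! i)" by simp_all
    show "xss ! i ! j < n" using r nth_mem[of j "xss ! i"] that by (metis lessThan_iff subsetD)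
  qed
  have col: "distinct (map (\<lambda>r. r ! j) xss)" if "j < n" for j
    using xss that by (simp add: latin_rect_def)
  have "bij_betw (\<lambda>j. square_of n xss (i, j)) {..<n} {..<n}" if "i < n" for i
    using row[OF that] that
    by (intro bij_betw_if_inj_on_card) (auto simp: square_of_def inj_on_def nth_eq_iff_index_eq)
  moreover have "bij_betw (\<lambda>i. square_of n xss (i, j)) {..<n} {..<n}" if "j < n" for j
    using col[OF that] row xss(1) that
    by (intro bij_betw_if_inj_on_card) (auto simp: square_of_def inj_on_def distinct_conv_nth)
  ultimately show ?thesis
    by (simp add: latin_squares_def square_of_def)
qed

lemma bij_betw_rows_of:
  "bij_betw (rows_of n) (latin_squares {..<n} {..<n} {..<n}) {xss. length xss = n \<and> latin_rect n xss}"
proof (rule bij_betw_byWitness[where f' = "square_of n"])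
  show "\<forall>f\<in>latin_squares {..<n} {..<n} {..<n}. square_of n (rows_of n f) = f"
    by (auto intro!: extensionalityI[where A = "{..<n} \<times> {..<n}"]
        simp: latin_squares_def square_of_def rows_of_def)
  show "\<forall>xss\<in>{xss. length xss = n \<and> latin_rect n xss}. rows_of n (square_of n xss) = xss"
    by (auto intro!: nth_equalityI simp: rows_of_def square_of_def latin_rect_def)
  show "rows_of n ` latin_squares {..<n} {..<n} {..<n} \<subseteq> {xss. length xss = n \<and> latin_rect n xss}"
    using latin_rect_rows_of by (auto simp: rows_of_def)
  show "square_of n ` {xss. length xss = n \<and> latin_rect n xss} \<subseteq> latin_squares {..<n} {..<n} {..<n}"
    using square_of_in_latin_squares by blast
qed

lemma card_latin_squares_eq_length_latin_rects:
  "card (latin_squares {..<n} {..<n} {..<n}) = length (latin_rects n n)"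
  using bij_betw_same_card[OF bij_betw_rows_of] distinct_card[OF distinct_latin_rects]
  by (simp add: set_latin_rects)

lemma card_latin_squares_1: "card (latin_squares {..<1::nat} {..<1::nat} {..<1::nat}) = 1"
  unfolding card_latin_squares_eq_length_latin_rects by code_simp

lemma card_latin_squares_2: "card (latin_squares {..<2::nat} {..<2::nat} {..<2::nat}) = 2"
  unfolding card_latin_squares_eq_length_latin_rects by code_simp

lemma card_latin_squares_4: "card (latin_squares {..<4::nat} {..<4::nat} {..<4::nat}) = 576"
  unfolding card_latin_squares_eq_length_latin_rects by code_simp

section \<open>Latin squares lying over a Latin square on fibres\<close>

lemma restrict_to_fibres_in_latin_squares:
  assumes f: "f \<in> latin_squares R C S"
    and over: "\<forall>i\<in>R. \<forall>j\<in>C. sig (f (i, j)) = op (rho i) (kap j)"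
    and fin: "finite S"
    and card: "card {i \<in> R. rho i = p} = card {s \<in> S. sig s = op p q}"
      "card {j \<in> C. kap j = q} = card {s \<in> S. sig s = op p q}"
  shows "restrict f ({i \<in> R. rho i = p} \<times> {j \<in> C. kap j = q})
           \<in> latin_squares {i \<in> R. rho i = p} {j \<in> C. kap j = q} {s \<in> S. sig s = op p q}"
  unfolding restrict_in_latin_squares_iff
proof (intro conjI ballI)
  fix i assume i: "i \<in> {i \<in> R. rho i = p}"
  have "bij_betw (\<lambda>j. f (i, j)) C S" using f i by (simp add: latin_squares_def)
  then show "bij_betw (\<lambda>j. f (i, j)) {j \<in> C. kap j = q} {s \<in> S. sig s = op p q}"
    using over i fin card(2)
    by (intro bij_betw_if_inj_on_card) (auto simp: bij_betw_def intro: inj_on_subset)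
next
  fix j assume j: "j \<in> {j \<in> C. kap j = q}"
  have "bij_betw (\<lambda>i. f (i, j)) R S" using f j by (simp add: latin_squares_def)
  then show "bij_betw (\<lambda>i. f (i, j)) {i \<in> R. rho i = p} {s \<in> S. sig s = op p q}"
    using over j fin card(1)
    by (intro bij_betw_if_inj_on_card) (auto simp: bij_betw_def intro: inj_on_subset)
qed

lemma glue_latin_squares_on_fibres:
  assumes g: "\<And>p q. g (p, q) \<in> latin_squares {i \<in> R. rho i = p} {j \<in> C. kap j = q} {s \<in> S. sig s = op p q}"
    and op: "\<And>t. inj (op t)" "\<And>t. inj (\<lambda>u. op u t)"
    and fin: "finite S" and card: "card R = card S" "card C = card S"
  defines "f \<equiv> restrict (\<lambda>(i, j). g (rho i, kap j) (i, j)) (R \<times> C)"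
  shows "f \<in> latin_squares R C S" "\<forall>i\<in>R. \<forall>j\<in>C. sig (f (i, j)) = op (rho i) (kap j)"
proof -
  have val: "g (rho i, kap j) (i, j) \<in> S \<and> sig (g (rho i, kap j) (i, j)) = op (rho i) (kap j)"
    if "i \<in> R" "j \<in> C" for i j
    using latin_square_value_in[OF g[of "rho i" "kap j"], of i j] that by simp
  then show "\<forall>i\<in>R. \<forall>j\<in>C. sig (f (i, j)) = op (rho i) (kap j)" by (simp add: f_def)
  have "bij_betw (\<lambda>j. g (rho i, kap j) (i, j)) C S" if i: "i \<in> R" for i
  proof (rule bij_betw_if_inj_on_card[OF fin _ _ card(2)])
    show "inj_on (\<lambda>j. g (rho i, kap j) (i, j)) C"
    proof (rule inj_on_if_inj_on_fibres[where k = kap])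
      show "kap j = kap j'" if "j \<in> C" "j' \<in> C" "g (rho i, kap j) (i, j) = g (rho i, kap j') (i, j')" for j j'
        using val[OF i that(1)] val[OF i that(2)] that(3) op(1) by (metis injD)
      fix q
      have "inj_on (\<lambda>j. g (rho i, q) (i, j)) {j \<in> C. kap j = q}"
        using g[of "rho i" q] i by (auto simp: latin_squares_def bij_betw_def)
      then show "inj_on (\<lambda>j. g (rho i, kap j) (i, j)) {j \<in> C. kap j = q}"
        by (rule inj_on_cong[THEN iffD1, rotated]) simp
    qed
  qed (use val i in auto)
  moreover have "bij_betw (\<lambda>i. g (rho i, kap j) (i, j)) R S" if j: "j \<in> C" for j
  proof (rule bij_betw_if_inj_on_card[OF fin _ _ card(1)])
    show "inj_on (\<lambda>i. g (rho i, kap j) (i, j)) R"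
    proof (rule inj_on_if_inj_on_fibres[where k = rho])
      show "rho i = rho i'" if "i \<in> R" "i' \<in> R" "g (rho i, kap j) (i, j) = g (rho i', kap j) (i', j)" for i i'
        using val[OF that(1) j] val[OF that(2) j] that(3) op(2) by (metis injD)
      fix p
      have "inj_on (\<lambda>i. g (p, kap j) (i, j)) {i \<in> R. rho i = p}"
        using g[of p "kap j"] j by (auto simp: latin_squares_def bij_betw_def)
      then show "inj_on (\<lambda>i. g (rho i, kap j) (i, j)) {i \<in> R. rho i = p}"
        by (rule inj_on_cong[THEN iffD1, rotated]) simp
    qed
  qed (use val j in auto)
  ultimately show "f \<in> latin_squares R C S"
    unfolding f_def restrict_in_latin_squares_iff by simp
qed

lemma card_latin_squares_over:
  fixes rho :: "'a \<Rightarrow> 'g::finite" and kap :: "'b \<Rightarrow> 'g" and sig :: "'c \<Rightarrow> 'g"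
  assumes fin: "finite R" "finite C" "finite S"
    and op: "\<And>t. inj (op t)" "\<And>t. inj (\<lambda>u. op u t)"
    and fibres: "\<And>t. card {i \<in> R. rho i = t} = n" "\<And>t. card {j \<in> C. kap j = t} = n"
      "\<And>t. card {s \<in> S. sig s = t} = n"
  shows "card {f \<in> latin_squares R C S. \<forall>i\<in>R. \<forall>j\<in>C. sig (f (i, j)) = op (rho i) (kap j)}
         = card (latin_squares {..<n} {..<n} {..<n}) ^ (CARD('g) * CARD('g))"
proof -
  define Rp where "Rp p = {i \<in> R. rho i = p}" for p
  define Cq where "Cq q = {j \<in> C. kap j = q}" for q
  define Sr where "Sr r = {s \<in> S. sig s = r}" for r
  define over where "over = {f \<in> latin_squares R C S. \<forall>i\<in>R. \<forall>j\<in>C. sig (f (i, j)) = op (rho i) (kap j)}"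
  define blocks where "blocks = (\<Pi>\<^sub>E (p, q)\<in>UNIV. latin_squares (Rp p) (Cq q) (Sr (op p q)))"
  have card_total: "card R = card S" "card C = card S"
    using card_eq_if_card_fibres[OF fin(1) fibres(1)] card_eq_if_card_fibres[OF fin(2) fibres(2)]
      card_eq_if_card_fibres[OF fin(3) fibres(3)] by simp_all
  define pieces where "pieces f = (\<lambda>(p, q). restrict f (Rp p \<times> Cq q))" for f :: "'a \<times> 'b \<Rightarrow> 'c"
  define glue where "glue g = restrict (\<lambda>(i, j). g (rho i, kap j) (i, j)) (R \<times> C)"
    for g :: "'g \<times> 'g \<Rightarrow> 'a \<times> 'b \<Rightarrow> 'c"
  have "bij_betw pieces over blocks"
  proof (rule bij_betw_byWitness[where f' = glue])
    show "\<forall>f\<in>over. glue (pieces f) = f"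
      by (auto intro!: extensionalityI[where A = "R \<times> C"]
          simp: glue_def pieces_def over_def latin_squares_def Rp_def Cq_def)
    show "\<forall>g\<in>blocks. pieces (glue g) = g"
    proof
      fix g assume g: "g \<in> blocks"
      show "pieces (glue g) = g"
      proof
        fix pq :: "'g \<times> 'g"
        obtain p q where pq: "pq = (p, q)" by fastforce
        have "g (p, q) \<in> extensional (Rp p \<times> Cq q)"
          using g by (auto simp: blocks_def latin_squares_def)
        then show "pieces (glue g) pq = g pq"
          by (auto intro!: extensionalityI[where A = "Rp p \<times> Cq q"]
              simp: pq pieces_def glue_def Rp_def Cq_def)
      qed
    qed
    show "pieces ` over \<subseteq> blocks"
      by (auto simp: pieces_def over_def blocks_def Rp_def Cq_def Sr_def fibres
          intro!: restrict_to_fibres_in_latin_squares fin(3))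
    show "glue ` blocks \<subseteq> over"
    proof
      fix f assume "f \<in> glue ` blocks"
      then obtain g where g: "g \<in> blocks" and f: "f = glue g" by blast
      have "g (p, q) \<in> latin_squares {i \<in> R. rho i = p} {j \<in> C. kap j = q} {s \<in> S. sig s = op p q}"
        for p q
        using PiE_mem[OF g[unfolded blocks_def], of "(p, q)"] by (simp add: Rp_def Cq_def Sr_def)
      from glue_latin_squares_on_fibres[OF this op fin(3) card_total] show "f \<in> over"
        by (simp add: f glue_def over_def)
    qed
  qed
  then have "card over = card blocks" by (rule bij_betw_same_card)
  also have "\<dots> = (\<Prod>(p, q)\<in>UNIV. card (latin_squares (Rp p) (Cq q) (Sr (op p q))))"
    by (simp add: blocks_def card_PiE case_prod_beta)
  also have "\<dots> = (\<Prod>(p, q)\<in>(UNIV :: ('g \<times> 'g) set). card (latin_squares {..<n} {..<n} {..<n}))"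
    using fin by (intro prod.cong refl) (auto simp: Rp_def Cq_def Sr_def fibres intro!: card_latin_squares_eq)
  finally show ?thesis
    by (simp add: over_def)
qed

section \<open>Latin squares of order 8 and their codes\<close>

definition code_of :: "(nat \<times> nat \<Rightarrow> nat) \<Rightarrow> (nat \<times> nat \<times> nat) set" where
  "code_of f = {(i, j, f (i, j)) | i j. i < 8 \<and> j < 8}"

lemma inj_on_code_of: "inj_on code_of (latin_squares {..<8} {..<8} {..<8})"
proof
  fix f g assume f: "f \<in> latin_squares {..<8} {..<8} {..<8}" and g: "g \<in> latin_squares {..<8} {..<8} {..<8}"
    and eq: "code_of f = code_of g"
  show "f = g"
  proof (rule extensionalityI[where A = "{..<8} \<times> {..<8}"])
    show "f \<in> extensional ({..<8} \<times> {..<8})" "g \<in> extensional ({..<8} \<times> {..<8})"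
      using f g by (auto simp: latin_squares_def)
    fix p assume "p \<in> {..<8::nat} \<times> {..<8::nat}"
    then obtain i j where p: "p = (i, j)" "i < 8" "j < 8" by auto
    then have "(i, j, f (i, j)) \<in> code_of g" using eq unfolding code_of_def by blast
    then show "f p = g p" unfolding code_of_def p by blast
  qed
qed

lemma latin_codes_eq_image_code_of: "latin_codes = code_of ` latin_squares {..<8} {..<8} {..<8}"
proof
  show "latin_codes \<subseteq> code_of ` latin_squares {..<8} {..<8} {..<8}"
  proof
    fix L assume "L \<in> latin_codes"
    then obtain a where a: "\<forall>i<8. \<forall>j<8. a i j < 8" "\<forall>i<8. inj_on (\<lambda>j. a i j) {..<8}"
        "\<forall>j<8. inj_on (\<lambda>i. a i j) {..<8}" and L: "L = {(i, j, a i j) | i j. i < 8 \<and> j < 8}"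
      by (auto simp: latin_codes_def atLeast0LessThan)
    define f where "f = restrict (\<lambda>(i, j). a i j) ({..<8} \<times> {..<8})"
    have "f \<in> latin_squares {..<8} {..<8} {..<8}"
      unfolding f_def restrict_in_latin_squares_iff
      using a by (auto intro!: bij_betw_if_inj_on_card)
    moreover have "code_of f = L" by (auto simp: L code_of_def f_def)
    ultimately show "L \<in> code_of ` latin_squares {..<8} {..<8} {..<8}" by blast
  qed
  show "code_of ` latin_squares {..<8} {..<8} {..<8} \<subseteq> latin_codes"
  proof
    fix L assume "L \<in> code_of ` latin_squares {..<8} {..<8} {..<8}"
    then obtain f where f: "f \<in> latin_squares {..<8} {..<8} {..<8}" and L: "L = code_of f" by blast
    show "L \<in> latin_codes"
      unfolding latin_codes_def
    proof (intro CollectI exI[where x = "\<lambda>i j. f (i, j)"] conjI)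
      show "\<forall>i<8. \<forall>j<8. f (i, j) < 8" using f by (auto dest: latin_square_value_in)
      show "\<forall>i<8. inj_on (\<lambda>j. f (i, j)) {0..<8}" "\<forall>j<8. inj_on (\<lambda>i. f (i, j)) {0..<8}"
        using f by (auto simp: latin_squares_def bij_betw_def atLeast0LessThan)
    qed (simp add: L code_of_def)
  qed
qed

lemma Ccode_code_of:
  "Ccode (code_of f) = {concat3 (phi i) (phi j) (phi (f (i, j))) | i j. i < 8 \<and> j < 8}"
  unfolding Ccode_def code_of_def by (auto simp: image_iff) force

lemma concat3_phi_iff:
  assumes "i < 8" "j < 8" "s < 8"
  shows "concat3 (phi i) (phi j) (phi s) k \<longleftrightarrow> k = i \<or> k = 8 + j \<or> k = 16 + s"
  using assms by (auto simp: concat3_def phi_def)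

lemma orth_code_word_iff:
  assumes "i < 8" "j < 8" "s < 8"
  shows "orth 24 (concat3 (phi i) (phi j) (phi s)) v \<longleftrightarrow> block v 2 s = (block v 0 i \<noteq> block v 1 j)"
proof -
  have support: "{k. k < 24 \<and> concat3 (phi i) (phi j) (phi s) k \<and> v k}
      = (if v i then {i} else {}) \<union> (if v (8 + j) then {8 + j} else {})
        \<union> (if v (16 + s) then {16 + s} else {})"
    using assms by (auto simp: concat3_phi_iff)
  have "i \<noteq> 8 + j" "i \<noteq> 16 + s" "8 + j \<noteq> 16 + s" using assms by auto
  then show ?thesis
    unfolding orth_def support using assms
    by (cases "v i"; cases "v (8 + j)"; cases "v (16 + s)") (simp_all add: block_def)
qed
lemma orth_vadd: "orth n c (vadd x y) \<longleftrightarrow> (orth n c x \<longleftrightarrow> orth n c y)"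
proof -
  define A where "A = {k. k < n \<and> c k \<and> x k}"
  define B where "B = {k. k < n \<and> c k \<and> y k}"
  define D where "D = {k. k < n \<and> c k \<and> vadd x y k}"
  have "A \<union> B = D \<union> (A \<inter> B)" "D \<inter> (A \<inter> B) = {}"
    by (auto simp: A_def B_def D_def vadd_def)
  then have "card A + card B = card D + 2 * card (A \<inter> B)"
    using card_Un_Int[of A B] card_Un_disjoint[of D "A \<inter> B"] by (simp add: A_def B_def D_def)
  then show ?thesis
    unfolding orth_def A_def[symmetric] B_def[symmetric] D_def[symmetric] by presburger
qed

lemma LS2_vadd_right: "LS2 x y = LS2 x (vadd x y)"
  by (auto simp: LS2_def LS_def orth_vadd)

lemma LS2_vadd_left: "LS2 x y = LS2 (vadd x y) y"
  by (auto simp: LS2_def LS_def orth_vadd)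

lemma card_latin_codes_over:
  fixes rho kap sig :: "nat \<Rightarrow> 'g::finite"
  assumes op: "\<And>t. inj (op t)" "\<And>t. inj (\<lambda>u. op u t)"
    and fibres: "\<And>t. card {i \<in> {..<8}. rho i = t} = n" "\<And>t. card {j \<in> {..<8}. kap j = t} = n"
      "\<And>t. card {s \<in> {..<8}. sig s = t} = n"
    and Q: "\<And>i j s. i < 8 \<Longrightarrow> j < 8 \<Longrightarrow> s < 8 \<Longrightarrow>
      Q (concat3 (phi i) (phi j) (phi s)) \<longleftrightarrow> sig s = op (rho i) (kap j)"
  shows "card {L \<in> latin_codes. \<forall>c\<in>Ccode L. Q c}
           = card (latin_squares {..<n} {..<n} {..<n}) ^ (CARD('g) * CARD('g))"
proof -
  define over where "over = {f \<in> latin_squares {..<8} {..<8} {..<8}.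
    \<forall>i\<in>{..<8}. \<forall>j\<in>{..<8}. sig (f (i, j)) = op (rho i) (kap j)}"
  have iff: "(\<forall>c\<in>Ccode (code_of f). Q c) \<longleftrightarrow> (\<forall>i\<in>{..<8}. \<forall>j\<in>{..<8}. sig (f (i, j)) = op (rho i) (kap j))"
    if "f \<in> latin_squares {..<8} {..<8} {..<8}" for f
  proof -
    have "(\<forall>c\<in>Ccode (code_of f). Q c) \<longleftrightarrow> (\<forall>i<8. \<forall>j<8. Q (concat3 (phi i) (phi j) (phi (f (i, j)))))"
      by (auto simp: Ccode_code_of)
    also have "\<dots> \<longleftrightarrow> (\<forall>i\<in>{..<8}. \<forall>j\<in>{..<8}. sig (f (i, j)) = op (rho i) (kap j))"
      using Q latin_square_value_in[OF that] by auto
    finally show ?thesis .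
  qed
  have "{L \<in> latin_codes. \<forall>c\<in>Ccode L. Q c}
      = code_of ` {f \<in> latin_squares {..<8} {..<8} {..<8}. \<forall>c\<in>Ccode (code_of f). Q c}"
    unfolding latin_codes_eq_image_code_of by blast
  also have "\<dots> = code_of ` over"
    unfolding over_def using iff by (intro arg_cong[where f = "image code_of"] Collect_cong) blast
  finally have "card {L \<in> latin_codes. \<forall>c\<in>Ccode L. Q c} = card (code_of ` over)" by simp
  also have "\<dots> = card over"
    by (rule card_image, rule inj_on_subset[OF inj_on_code_of]) (simp add: over_def)
  also have "\<dots> = card (latin_squares {..<n} {..<n} {..<n}) ^ (CARD('g) * CARD('g))"
    unfolding over_def by (rule card_latin_squares_over[OF _ _ _ op fibres]) auto
  finally show ?thesis .
qed

section \<open>Column patterns of the blocks\<close>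

lemma sum_UNIV_bool3:
  "(\<Sum>t\<in>(UNIV :: (bool \<times> bool \<times> bool) set). h t) =
     h (True, True, True) + h (True, True, False) + h (True, False, True) + h (True, False, False) +
     h (False, True, True) + h (False, True, False) + h (False, False, True) + h (False, False, False)"
proof -
  have U: "(UNIV :: (bool \<times> bool \<times> bool) set) =
      {(True, True, True), (True, True, False), (True, False, True), (True, False, False),
       (False, True, True), (False, True, False), (False, False, True), (False, False, False)}"
    by auto
  show ?thesis unfolding U by (simp add: add.assoc)
qed

lemma wt_eq_card: "wt n u = card {p \<in> {..<n}. u p}"
  unfolding wt_def by (rule arg_cong[where f = card]) auto

lemma card_block_patterns_eq_1:
  fixes u v w :: bvec
  assumes wt: "wt 8 u = 4" "wt 8 v = 4" "wt 8 w = 4"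
    and wt_sum: "wt 8 (vadd u v) = 4" "wt 8 (vadd u w) = 4" "wt 8 (vadd v w) = 4"
    and indep: "psi_indep3 u v w"
  shows "card {p \<in> {..<8}. (u p, v p, w p) = t} = 1"
proof -
  define m where "m t = card {p \<in> {..<8::nat}. (u p, v p, w p) = t}" for t
  have count: "card {p \<in> {..<8}. Q (u p, v p, w p)} = (\<Sum>t\<in>UNIV. if Q t then m t else 0)" for Q
    unfolding m_def by (rule card_eq_sum_card_fibres) simp
  have sum_not_const: "\<not> (\<forall>p<8. u p = (v p \<noteq> w p))" "\<not> (\<forall>p<8. u p \<noteq> (v p \<noteq> w p))"
    using indep[unfolded psi_indep3_def, rule_format, of True True True] by (simp_all add: Let_def)
  have total: "(\<Sum>t\<in>UNIV. m t) = 8"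
    using count[of "\<lambda>_. True"] by simp
  have weights: "(\<Sum>t\<in>UNIV. if fst t then m t else 0) = 4"
      "(\<Sum>t\<in>UNIV. if fst (snd t) then m t else 0) = 4"
      "(\<Sum>t\<in>UNIV. if snd (snd t) then m t else 0) = 4"
    unfolding count[symmetric] using wt by (simp_all add: wt_eq_card)
  have sum_weights: "(\<Sum>t\<in>UNIV. if fst t \<noteq> fst (snd t) then m t else 0) = 4"
      "(\<Sum>t\<in>UNIV. if fst t \<noteq> snd (snd t) then m t else 0) = 4"
      "(\<Sum>t\<in>UNIV. if fst (snd t) \<noteq> snd (snd t) then m t else 0) = 4"
    unfolding count[symmetric] using wt_sum by (simp_all add: wt_eq_card vadd_def)
  have triple_sum: "(\<Sum>t\<in>UNIV. if fst t \<noteq> (fst (snd t) \<noteq> snd (snd t)) then m t else 0) \<noteq> 0"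
      "(\<Sum>t\<in>UNIV. if fst t = (fst (snd t) \<noteq> snd (snd t)) then m t else 0) \<noteq> 0"
    unfolding count[symmetric] using sum_not_const by auto
  note system = total weights sum_weights triple_sum
  note linear = system[unfolded sum_UNIV_bool3,
      simplified fst_conv snd_conv simp_thms if_True if_False add_0_left add_0_right]
  \<comment> \<open>The system forces m t = 1 + d or m t = 1 - d, according to the parity of t, for a single d;
    splitting on m (True, True, True) fixes d, and only d = 0 is compatible with nonnegativity and the
    two disequations.\<close>
  have "m (True, True, True) \<le> 4" using linear by linarith
  then have "m (True, True, True) = 0 \<or> m (True, True, True) = 1 \<or> m (True, True, True) = 2
      \<or> m (True, True, True) = 3 \<or> m (True, True, True) = 4" by linarith
  then have "m (True, True, True) = 1 \<and> m (True, True, False) = 1 \<and> m (True, False, True) = 1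
      \<and> m (True, False, False) = 1 \<and> m (False, True, True) = 1 \<and> m (False, True, False) = 1
      \<and> m (False, False, True) = 1 \<and> m (False, False, False) = 1"
    using linear by (elim disjE) linarith+
  then have "m t = 1" by (cases t) (metis (full_types))
  then show ?thesis by (simp add: m_def)
qed

lemma card_block_marginals:
  fixes u v w :: bvec
  assumes patterns: "\<And>t. card {p \<in> {..<8}. (u p, v p, w p) = t} = 1"
  shows "card {p \<in> {..<8}. u p = a} = 4" "card {p \<in> {..<8}. v p = a} = 4"
    "card {p \<in> {..<8}. w p = a} = 4" "card {p \<in> {..<8}. (u p, v p) = q} = 2"
proof -
  have marginal: "card {p \<in> {..<8}. h (u p, v p, w p) = c} = card {t. h t = c}"
    for h :: "bool \<times> bool \<times> bool \<Rightarrow> 'c" and c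
    by (rule card_fibres_comp_if_card_fibres_1[OF _ patterns]) simp
  have "{t :: bool \<times> bool \<times> bool. fst t = a} = {a} \<times> UNIV"
    "{t :: bool \<times> bool \<times> bool. fst (snd t) = a} = UNIV \<times> {a} \<times> UNIV"
    "{t :: bool \<times> bool \<times> bool. snd (snd t) = a} = UNIV \<times> UNIV \<times> {a}"
    "{t :: bool \<times> bool \<times> bool. (fst t, fst (snd t)) = q} = {fst q} \<times> {snd q} \<times> UNIV"
    by auto
  then show "card {p \<in> {..<8}. u p = a} = 4" "card {p \<in> {..<8}. v p = a} = 4"
    "card {p \<in> {..<8}. w p = a} = 4" "card {p \<in> {..<8}. (u p, v p) = q} = 2"
    using marginal[of fst] marginal[of "\<lambda>t. fst (snd t)"] marginal[of "\<lambda>t. snd (snd t)"]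
      marginal[of "\<lambda>t. (fst t, fst (snd t))"]
    by (simp_all add: card_cartesian_product)
qed

lemma card_LS_if_blocks_balanced:
  assumes "\<And>k a. k < 3 \<Longrightarrow> card {p \<in> {..<8}. block v k p = a} = 4"
  shows "card (LS v) = 576 ^ 4"
proof -
  have fibres: "card {p \<in> {..<8}. block v 0 p = a} = 4" "card {p \<in> {..<8}. block v 1 p = a} = 4"
    "card {p \<in> {..<8}. block v 2 p = a} = 4" for a
    by (rule assms; simp)+
  have "card (LS v)
      = card (latin_squares {..<4::nat} {..<4::nat} {..<4::nat}) ^ (CARD(bool) * CARD(bool))"
    unfolding LS_def
    by (rule card_latin_codes_over[OF _ _ fibres, where op = "(\<noteq>)"])
       (auto simp: orth_code_word_iff inj_def)
  then show ?thesis by (simp add: card_latin_squares_4)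
qed

lemma card_LS2_if_blocks_balanced:
  assumes "\<And>k q. k < 3 \<Longrightarrow> card {p \<in> {..<8}. (block v k p, block w k p) = q} = 2"
  shows "card (LS2 v w) = 16 ^ 4"
proof -
  have fibres: "card {p \<in> {..<8}. (block v 0 p, block w 0 p) = q} = 2"
    "card {p \<in> {..<8}. (block v 1 p, block w 1 p) = q} = 2"
    "card {p \<in> {..<8}. (block v 2 p, block w 2 p) = q} = 2" for q
    by (rule assms; simp)+
  have "LS2 v w = {L \<in> latin_codes. \<forall>c\<in>Ccode L. orth 24 c v \<and> orth 24 c w}"
    by (auto simp: LS2_def LS_def)
  also have "card \<dots> = card (latin_squares {..<2::nat} {..<2::nat} {..<2::nat})
      ^ (CARD(bool \<times> bool) * CARD(bool \<times> bool))"
    by (rule card_latin_codes_over[OF _ _ fibres,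
          where op = "\<lambda>a b. (fst a \<noteq> fst b, snd a \<noteq> snd b)"])
       (auto simp: orth_code_word_iff inj_def)
  finally show ?thesis by (simp add: card_latin_squares_2)
qed

lemma card_LS3_if_blocks_balanced:
  assumes "\<And>k t. k < 3 \<Longrightarrow> card {p \<in> {..<8}. (block u k p, block v k p, block w k p) = t} = 1"
  shows "card (LS3 u v w) = 1"
proof -
  have fibres: "card {p \<in> {..<8}. (block u 0 p, block v 0 p, block w 0 p) = t} = 1"
    "card {p \<in> {..<8}. (block u 1 p, block v 1 p, block w 1 p) = t} = 1"
    "card {p \<in> {..<8}. (block u 2 p, block v 2 p, block w 2 p) = t} = 1" for t
    by (rule assms; simp)+
  have "LS3 u v w = {L \<in> latin_codes. \<forall>c\<in>Ccode L. orth 24 c u \<and> orth 24 c v \<and> orth 24 c w}"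
    by (auto simp: LS3_def LS_def)
  also have "card \<dots> = card (latin_squares {..<1::nat} {..<1::nat} {..<1::nat})
      ^ (CARD(bool \<times> bool \<times> bool) * CARD(bool \<times> bool \<times> bool))"
    by (rule card_latin_codes_over[OF _ _ fibres,
          where op = "\<lambda>a b. (fst a \<noteq> fst b, fst (snd a) \<noteq> fst (snd b), snd (snd a) \<noteq> snd (snd b))"])
       (auto simp: orth_code_word_iff inj_def)
  finally show ?thesis using card_latin_squares_1 by simp
qed

theorem lemma2:
  fixes x y z :: bvec
  assumes len: "\<forall>k\<ge>24. \<not> x k" "\<forall>k\<ge>24. \<not> y k" "\<forall>k\<ge>24. \<not> z k"
    and orth: "orth 24 x y" "orth 24 x z" "orth 24 y z"
    and wts: "\<forall>i<3. wt 8 (block x i) = 4 \<and> wt 8 (block y i) = 4 \<and> wt 8 (block z i) = 4"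
    and indep: "\<forall>i<3. psi_indep3 (block x i) (block y i) (block z i)"
    and sums: "\<forall>i<3. wt 8 (vadd (block x i) (block y i)) = 4 \<and>
                     wt 8 (vadd (block x i) (block z i)) = 4 \<and>
                     wt 8 (vadd (block y i) (block z i)) = 4"
  shows "(card (LS x) = 576 ^ 4 \<and> card (LS y) = 576 ^ 4 \<and> card (LS z) = 576 ^ 4)
       \<and> (card (LS2 x y) = 16 ^ 4 \<and> LS2 x y = LS2 x (vadd x y) \<and> LS2 x y = LS2 (vadd x y) y)
       \<and> card (LS3 x y z) = 1"
proof -
  have patterns: "card {p \<in> {..<8}. (block x k p, block y k p, block z k p) = t} = 1"
    if "k < 3" for k t
    using wts sums indep that by (intro card_block_patterns_eq_1) auto
  note marginals = card_block_marginals[OF patterns]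
  have "card (LS x) = 576 ^ 4" "card (LS y) = 576 ^ 4" "card (LS z) = 576 ^ 4"
    using marginals(1-3) by (blast intro: card_LS_if_blocks_balanced)+
  moreover have "card (LS2 x y) = 16 ^ 4"
    using marginals(4) by (blast intro: card_LS2_if_blocks_balanced)
  moreover have "card (LS3 x y z) = 1"
    using patterns by (blast intro: card_LS3_if_blocks_balanced)
  ultimately show ?thesis
    using LS2_vadd_right LS2_vadd_left by blast
qed

end
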